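(* Assume $\mathbb Ef(\boldsymbol X)=0$ and $p_{\min}>0$. Let $s\ge1$, let $m_1,\dots,m_{s-1}\in\{1,\dots,M\}$, define $R_0\equiv0$ and $R_t(\boldsymbol X)=R_{t-1}(\boldsymbol X)+\mathbb E(f(\boldsymbol X)-R_{t-1}(\boldsymbol X)\mid\boldsymbol X_{\mathcal X(m_t)})$ for $1\le t\le s-1$, and let $m\in\{1,\dots,M\}\setminus\{m_1,\dots,m_{s-1}\}$. Then $$\Big|\mathbb E\big[(\mathbb E(f(\boldsymbol X)-R_{s-1}(\boldsymbol X)\mid\boldsymbol X_{\mathcal X(m)}))^2\big]-\mathrm{Var}(g_m(\boldsymbol X))\Big|\le\frac{21\,\delta_0}{p_{\min}^2}\,\mathbb E[f(\boldsymbol X)^2].$$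
   Context: Setup. $\boldsymbol X=(X_1,\dots,X_p)^\top$ is a random vector in $\{0,1\}^p$; $\{1,\dots,p\}$ is partitioned into disjoint nonempty feature groups $\mathcal X(1),\dots,\mathcal X(M)$, $M\ge2$; a group is either a single feature or has $\#\mathcal X(m)>1$ and consists of one-hot indicators ($\sum_{j\in\mathcal X(m)}\mathbf 1\{X_j=1\}=1$ a.s.). $\boldsymbol X_H=(X_j)_{j\in H}$, $\boldsymbol X_{-H}=(X_j)_{j\notin H}$. Conditional expectations given null events are set to $0$. $p_{\min}=\min_{1\le l<k\le M,\,i\in\mathcal X(l),\,j\in\mathcal X(k),\,(a,b)\in\{0,1\}^2}\mathbb P(X_i=a,X_j=b)$; $\delta_0=\max_{1\le m\le M}\inf\{\delta\ge0:\mathbb P(\max_{i\in\mathcal X(m)}|\mathbb P(X_i=1\mid\boldsymbol X_{-\mathcal X(m)})-\mathbb P(X_i=1)|\le\delta)=1\}$. For $f:\{0,1\}^p\to\mathbb R$, $g_m(\boldsymbol X)=\mathbb E(f(\boldsymbol X)-\mathbb E(f(\boldsymbol X)\mid\boldsymbol X_{-\mathcal X(m)})\mid\boldsymbol X_{\mathcal X(m)})$. *)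

theory Defs
  imports "HOL-Probability.Probability"
begin

text \<open>The law of the random vector X in {0,1}^p is a pmf P on nat \<Rightarrow> bool
  (coordinates 1..p; coordinates outside {1..p} are always False).
  Conditional expectation of Y given X_H, evaluated at the outcome x;
  conditioning on a null event gives 0.\<close>

definition cond_exp :: "(nat \<Rightarrow> bool) pmf \<Rightarrow> nat set \<Rightarrow> ((nat \<Rightarrow> bool) \<Rightarrow> real) \<Rightarrow> (nat \<Rightarrow> bool) \<Rightarrow> real" where
  "cond_exp P H Y x =
     (let A = {y. \<forall>j\<in>H. y j = x j} in
      if measure_pmf.prob P A = 0 then 0
      else measure_pmf.expectation P (\<lambda>y. indicator A y * Y y) / measure_pmf.prob P A)"

definition p_min :: "(nat \<Rightarrow> bool) pmf \<Rightarrow> (nat \<Rightarrow> nat set) \<Rightarrow> nat \<Rightarrow> real" where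
  "p_min P G M = Min {measure_pmf.prob P {x. x i = a \<and> x j = b} | l k i j a b.
      1 \<le> l \<and> l < k \<and> k \<le> M \<and> i \<in> G l \<and> j \<in> G k}"

definition delta0 :: "(nat \<Rightarrow> bool) pmf \<Rightarrow> (nat \<Rightarrow> nat set) \<Rightarrow> nat \<Rightarrow> nat \<Rightarrow> real" where
  "delta0 P G M p = Max ((\<lambda>m. Inf {\<delta>. \<delta> \<ge> 0 \<and>
      measure_pmf.prob P {x. Max ((\<lambda>i. \<bar>cond_exp P ({1..p} - G m) (\<lambda>y. if y i then 1 else 0) x
             - measure_pmf.prob P {y. y i}\<bar>) ` G m) \<le> \<delta>} = 1}) ` {1..M})"

definition g_fun :: "(nat \<Rightarrow> bool) pmf \<Rightarrow> (nat \<Rightarrow> nat set) \<Rightarrow> nat \<Rightarrow> ((nat \<Rightarrow> bool) \<Rightarrow> real) \<Rightarrow> nat \<Rightarrow> (nat \<Rightarrow> bool) \<Rightarrow> real" where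
  "g_fun P G p f m = cond_exp P (G m) (\<lambda>y. f y - cond_exp P ({1..p} - G m) f y)"

fun R_seq :: "(nat \<Rightarrow> bool) pmf \<Rightarrow> (nat \<Rightarrow> nat set) \<Rightarrow> ((nat \<Rightarrow> bool) \<Rightarrow> real) \<Rightarrow> (nat \<Rightarrow> nat) \<Rightarrow> nat \<Rightarrow> (nat \<Rightarrow> bool) \<Rightarrow> real" where
  "R_seq P G f ms 0 = (\<lambda>x. 0)"
| "R_seq P G f ms (Suc t) = (\<lambda>x. R_seq P G f ms t x
      + cond_exp P (G (ms (Suc t))) (\<lambda>y. f y - R_seq P G f ms t y) x)"

end

theory Submission
  imports Defs
begin

text \<open>Write \<open>D\<close> for the coordinates outside group \<open>m\<close>. Since \<open>m\<close> is none of the groups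
  \<open>m\<^sub>1, \<dots>, m\<^sub>s\<^sub>-\<^sub>1\<close>, the remainder \<open>R\<^sub>s\<^sub>-\<^sub>1\<close> depends only on \<open>X\<^sub>D\<close>, so the two conditional
  expectations given group \<open>m\<close> differ by \<open>E(h | X\<^sub>m)\<close> for the centred function
  \<open>h = E(f | X\<^sub>D) - R\<^sub>s\<^sub>-\<^sub>1\<close> of \<open>X\<^sub>D\<close>. By the one-hot encoding each atom \<open>A\<close> of \<open>X\<^sub>m\<close> is a
  single-coordinate event \<open>X\<^sub>i = x\<^sub>i\<close>, hence \<open>E(1\<^sub>A h) = E((E(1\<^sub>A | X\<^sub>D) - P A) h)\<close> is at most
  \<open>\<delta>\<^sub>0 E|h|\<close> in absolute value; as \<open>P A \<ge> p\<^sub>m\<^sub>i\<^sub>n\<close> and \<open>E|h| \<le> 2 \<parallel>f\<parallel>\<^sub>2\<close>, the two conditional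
  expectations are pointwise within \<open>2 \<delta>\<^sub>0 \<parallel>f\<parallel>\<^sub>2 / p\<^sub>m\<^sub>i\<^sub>n\<close>. Finally
  \<open>|E a\<^sup>2 - E b\<^sup>2| \<le> sup |a - b| (\<parallel>a\<parallel>\<^sub>2 + \<parallel>b\<parallel>\<^sub>2)\<close> with both norms at most \<open>\<parallel>f\<parallel>\<^sub>2\<close>, which gives
  \<open>4 \<delta>\<^sub>0 E f\<^sup>2 / p\<^sub>m\<^sub>i\<^sub>n\<close>, and \<open>g\<^sub>m\<close> is centred, so its variance is \<open>E b\<^sup>2\<close>.\<close>

section \<open>Expectations under a finitely supported pmf\<close>

lemma expectation_finite_pmf:
  fixes u :: "'a \<Rightarrow> real"
  assumes "finite (set_pmf P)"
  shows "measure_pmf.expectation P u = (\<Sum>x\<in>set_pmf P. pmf P x * u x)"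
  by (subst integral_measure_pmf_real[where A = "set_pmf P"]) (use assms in \<open>auto simp: mult.commute\<close>)

lemma expectation_abs_le_sqrt_expectation_power2:
  fixes u :: "'a \<Rightarrow> real"
  assumes "finite (set_pmf P)"
  shows "measure_pmf.expectation P (\<lambda>x. \<bar>u x\<bar>) \<le> sqrt (measure_pmf.expectation P (\<lambda>x. (u x)\<^sup>2))"
proof -
  have "0 \<le> measure_pmf.variance P (\<lambda>x. \<bar>u x\<bar>)"
    by (rule measure_pmf.variance_positive)
  also have "\<dots> = measure_pmf.expectation P (\<lambda>x. (u x)\<^sup>2) - (measure_pmf.expectation P (\<lambda>x. \<bar>u x\<bar>))\<^sup>2"
    by (subst measure_pmf.variance_eq) (auto intro: integrable_measure_pmf_finite[OF assms])
  finally show ?thesis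
    by (intro real_le_rsqrt) simp
qed

lemma abs_expectation_power2_diff_le:
  fixes a b :: "'a \<Rightarrow> real"
  assumes fin: "finite (set_pmf P)" and close: "\<And>x. x \<in> set_pmf P \<Longrightarrow> \<bar>a x - b x\<bar> \<le> c"
  shows "\<bar>measure_pmf.expectation P (\<lambda>x. (a x)\<^sup>2) - measure_pmf.expectation P (\<lambda>x. (b x)\<^sup>2)\<bar>
         \<le> c * (sqrt (measure_pmf.expectation P (\<lambda>x. (a x)\<^sup>2)) + sqrt (measure_pmf.expectation P (\<lambda>x. (b x)\<^sup>2)))"
proof -
  let ?E = "measure_pmf.expectation P"
  note integrable = integrable_measure_pmf_finite[OF fin]
  obtain x where "x \<in> set_pmf P"
    using set_pmf_not_empty[of P] by blast
  then have "c \<ge> 0"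
    by (rule order_trans[OF abs_ge_zero close])
  have "\<bar>?E (\<lambda>x. (a x)\<^sup>2) - ?E (\<lambda>x. (b x)\<^sup>2)\<bar> = \<bar>?E (\<lambda>x. (a x - b x) * (a x + b x))\<bar>"
    by (simp add: integrable algebra_simps power2_eq_square)
  also have "\<dots> \<le> ?E (\<lambda>x. \<bar>(a x - b x) * (a x + b x)\<bar>)"
    by (rule integral_abs_bound)
  also have "\<dots> \<le> ?E (\<lambda>x. c * (\<bar>a x\<bar> + \<bar>b x\<bar>))"
  proof (intro integral_mono_AE integrable)
    show "AE x in measure_pmf P. \<bar>(a x - b x) * (a x + b x)\<bar> \<le> c * (\<bar>a x\<bar> + \<bar>b x\<bar>)"
      unfolding AE_measure_pmf_iff abs_mult
      using close \<open>c \<ge> 0\<close> by (auto intro!: mult_mono abs_triangle_ineq)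
  qed
  also have "\<dots> = c * (?E (\<lambda>x. \<bar>a x\<bar>) + ?E (\<lambda>x. \<bar>b x\<bar>))"
    by (simp add: integrable)
  also have "\<dots> \<le> c * (sqrt (?E (\<lambda>x. (a x)\<^sup>2)) + sqrt (?E (\<lambda>x. (b x)\<^sup>2)))"
    using \<open>c \<ge> 0\<close> expectation_abs_le_sqrt_expectation_power2[OF fin]
    by (intro mult_left_mono add_mono) auto
  finally show ?thesis .
qed

section \<open>Conditional expectation given a set of coordinates\<close>

definition depends_only_on :: "nat set \<Rightarrow> ((nat \<Rightarrow> bool) \<Rightarrow> real) \<Rightarrow> bool" where
  "depends_only_on H Z \<longleftrightarrow> (\<forall>x y. (\<forall>j\<in>H. x j = y j) \<longrightarrow> Z x = Z y)"

lemma depends_only_on_cond_exp: "depends_only_on H (cond_exp P H Y)"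
  unfolding depends_only_on_def
proof (intro allI impI)
  fix x y :: "nat \<Rightarrow> bool"
  assume "\<forall>j\<in>H. x j = y j"
  then have "{z. \<forall>j\<in>H. z j = x j} = {z. \<forall>j\<in>H. z j = y j}"
    by auto
  then show "cond_exp P H Y x = cond_exp P H Y y"
    unfolding cond_exp_def by simp
qed

lemma depends_only_on_mono: "depends_only_on H Z \<Longrightarrow> H \<subseteq> K \<Longrightarrow> depends_only_on K Z"
  unfolding depends_only_on_def by blast

lemma depends_only_on_diff:
  "depends_only_on H Y \<Longrightarrow> depends_only_on H Z \<Longrightarrow> depends_only_on H (\<lambda>x. Y x - Z x)"
  unfolding depends_only_on_def by metis

lemma depends_only_on_add:
  "depends_only_on H Y \<Longrightarrow> depends_only_on H Z \<Longrightarrow> depends_only_on H (\<lambda>x. Y x + Z x)"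
  unfolding depends_only_on_def by metis

lemma cond_exp_cong:
  "(\<And>y. y \<in> set_pmf P \<Longrightarrow> Y y = Y' y) \<Longrightarrow> cond_exp P H Y x = cond_exp P H Y' x"
  unfolding cond_exp_def Let_def
  by (simp add: integral_cong_AE AE_measure_pmf_iff)

lemma cond_exp_diff:
  assumes "finite (set_pmf P)"
  shows "cond_exp P H (\<lambda>y. Y y - Z y) x = cond_exp P H Y x - cond_exp P H Z x"
  unfolding cond_exp_def Let_def
  by (simp add: integrable_measure_pmf_finite[OF assms] right_diff_distrib diff_divide_distrib)

lemma cond_exp_const: "x \<in> set_pmf P \<Longrightarrow> cond_exp P H (\<lambda>_. c) x = c"
  unfolding cond_exp_def Let_def
  by (auto dest!: measure_pmf_posI[where A = "{y. \<forall>j\<in>H. y j = x j}"])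

lemma expectation_cond_exp_mult:
  assumes fin: "finite (set_pmf P)" and Z: "depends_only_on H Z"
  shows "measure_pmf.expectation P (\<lambda>x. cond_exp P H Y x * Z x)
       = measure_pmf.expectation P (\<lambda>x. Y x * Z x)"
proof -
  define S w where "S = set_pmf P" and "w = pmf P"
  define A where "A x = {y. \<forall>j\<in>H. y j = x j}" for x :: "nat \<Rightarrow> bool"
  define N where "N x = measure_pmf.prob P (A x)" for x
  have A_sym: "indicator (A x) y = (indicator (A y) x :: real)" for x y
    by (auto simp: A_def split: split_indicator)
  have A_eq: "A x = A y" "Z x = Z y" if "y \<in> A x" for x y
    using that Z by (auto simp: A_def depends_only_on_def)
  have N_pos: "N x > 0" if "x \<in> S" for x
    unfolding N_def using that by (intro measure_pmf_posI) (auto simp: S_def A_def)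
  have N_sum: "N y = (\<Sum>x\<in>S. w x * indicator (A y) x)" for y
    unfolding N_def S_def w_def by (simp add: expectation_finite_pmf[OF fin, symmetric])
  have cond_exp_sum: "cond_exp P H Y x = (\<Sum>y\<in>S. w y * indicator (A x) y * Y y) / N x" if "x \<in> S" for x
    using N_pos[OF that] unfolding cond_exp_def Let_def N_def A_def S_def w_def
    by (simp add: expectation_finite_pmf[OF fin] mult.assoc)
  have "measure_pmf.expectation P (\<lambda>x. cond_exp P H Y x * Z x)
      = (\<Sum>x\<in>S. \<Sum>y\<in>S. w x * w y * indicator (A x) y * Y y * Z x / N x)"
    unfolding expectation_finite_pmf[OF fin] S_def[symmetric] w_def[symmetric]
    by (intro sum.cong refl)
       (simp add: cond_exp_sum sum_distrib_left sum_distrib_right sum_divide_distrib mult.assoc)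
  txt \<open>If \<open>y \<in> A x\<close> then \<open>x\<close> and \<open>y\<close> lie in the same atom, so \<open>Z\<close> and \<open>N\<close> may be evaluated at \<open>y\<close>.\<close>
  also have "\<dots> = (\<Sum>y\<in>S. \<Sum>x\<in>S. w x * indicator (A y) x * (w y * Y y * Z y / N y))"
    by (subst sum.swap, intro sum.cong refl)
       (auto simp: A_sym N_def A_eq split: split_indicator)
  also have "\<dots> = (\<Sum>y\<in>S. w y * (Y y * Z y))"
  proof (intro sum.cong refl)
    fix y assume "y \<in> S"
    have "(\<Sum>x\<in>S. w x * indicator (A y) x * (w y * Y y * Z y / N y)) = N y * (w y * Y y * Z y / N y)"
      unfolding N_sum sum_distrib_right ..
    also have "\<dots> = w y * (Y y * Z y)"
      using N_pos[OF \<open>y \<in> S\<close>] by simp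
    finally show "(\<Sum>x\<in>S. w x * indicator (A y) x * (w y * Y y * Z y / N y)) = w y * (Y y * Z y)" .
  qed
  also have "\<dots> = measure_pmf.expectation P (\<lambda>x. Y x * Z x)"
    unfolding expectation_finite_pmf[OF fin] S_def w_def ..
  finally show ?thesis .
qed

lemma expectation_cond_exp:
  "finite (set_pmf P) \<Longrightarrow> measure_pmf.expectation P (cond_exp P H Y) = measure_pmf.expectation P Y"
  using expectation_cond_exp_mult[of P H "\<lambda>_. 1" Y] by (simp add: depends_only_on_def)

lemma expectation_power2_cond_exp_residual:
  assumes fin: "finite (set_pmf P)"
  shows "measure_pmf.expectation P (\<lambda>x. (Y x - cond_exp P H Y x)\<^sup>2)
       = measure_pmf.expectation P (\<lambda>x. (Y x)\<^sup>2) - measure_pmf.expectation P (\<lambda>x. (cond_exp P H Y x)\<^sup>2)"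
proof -
  have "measure_pmf.expectation P (\<lambda>x. (cond_exp P H Y x)\<^sup>2)
      = measure_pmf.expectation P (\<lambda>x. Y x * cond_exp P H Y x)"
    unfolding power2_eq_square by (rule expectation_cond_exp_mult[OF fin depends_only_on_cond_exp])
  then show ?thesis
    by (simp add: power2_diff integrable_measure_pmf_finite[OF fin] mult.assoc)
qed

lemma expectation_power2_cond_exp_le:
  assumes "finite (set_pmf P)"
  shows "measure_pmf.expectation P (\<lambda>x. (cond_exp P H Y x)\<^sup>2) \<le> measure_pmf.expectation P (\<lambda>x. (Y x)\<^sup>2)"
proof -
  have "0 \<le> measure_pmf.expectation P (\<lambda>x. (Y x - cond_exp P H Y x)\<^sup>2)"
    by (simp add: Bochner_Integration.integral_nonneg)
  then show ?thesis
    using expectation_power2_cond_exp_residual[OF assms, where Y = Y and H = H] by linarith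
qed

lemma expectation_power2_cond_exp_residual_le:
  assumes "finite (set_pmf P)"
  shows "measure_pmf.expectation P (\<lambda>x. (Y x - cond_exp P H Y x)\<^sup>2) \<le> measure_pmf.expectation P (\<lambda>x. (Y x)\<^sup>2)"
proof -
  have "0 \<le> measure_pmf.expectation P (\<lambda>x. (cond_exp P H Y x)\<^sup>2)"
    by (simp add: Bochner_Integration.integral_nonneg)
  then show ?thesis
    using expectation_power2_cond_exp_residual[OF assms, where Y = Y and H = H] by linarith
qed

section \<open>Backfitting remainders\<close>

lemma expectation_g_fun:
  assumes fin: "finite (set_pmf P)"
  shows "measure_pmf.expectation P (g_fun P G p f m) = 0"
  unfolding g_fun_def expectation_cond_exp[OF fin]
  by (simp add: integrable_measure_pmf_finite[OF fin] expectation_cond_exp[OF fin])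

lemma depends_only_on_R_seq:
  assumes "\<And>t. t \<in> {1..n} \<Longrightarrow> G (ms t) \<subseteq> D"
  shows "depends_only_on D (R_seq P G f ms n)"
  using assms
proof (induction n)
  case 0
  then show ?case by (simp add: depends_only_on_def)
next
  case (Suc n)
  have "depends_only_on D (cond_exp P (G (ms (Suc n))) (\<lambda>y. f y - R_seq P G f ms n y))"
    using Suc.prems by (intro depends_only_on_mono[OF depends_only_on_cond_exp]) auto
  with Suc show ?case
    by (simp add: depends_only_on_add)
qed

lemma expectation_R_seq:
  assumes fin: "finite (set_pmf P)" and mean0: "measure_pmf.expectation P f = 0"
  shows "measure_pmf.expectation P (R_seq P G f ms n) = 0"
proof (induction n)
  case (Suc n)
  then show ?case
    using mean0 by (simp add: integrable_measure_pmf_finite[OF fin] expectation_cond_exp[OF fin])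
qed simp

lemma expectation_power2_residual_R_seq_le:
  assumes fin: "finite (set_pmf P)"
  shows "measure_pmf.expectation P (\<lambda>x. (f x - R_seq P G f ms n x)\<^sup>2)
       \<le> measure_pmf.expectation P (\<lambda>x. (f x)\<^sup>2)"
proof (induction n)
  case (Suc n)
  let ?Y = "\<lambda>y. f y - R_seq P G f ms n y"
  have "measure_pmf.expectation P (\<lambda>x. (f x - R_seq P G f ms (Suc n) x)\<^sup>2)
      = measure_pmf.expectation P (\<lambda>x. (?Y x - cond_exp P (G (ms (Suc n))) ?Y x)\<^sup>2)"
    by (simp add: algebra_simps)
  also have "\<dots> \<le> measure_pmf.expectation P (\<lambda>x. (?Y x)\<^sup>2)"
    by (rule expectation_power2_cond_exp_residual_le[OF fin])
  finally show ?case
    using Suc.IH by linarith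
qed simp

section \<open>Coordinate events and the dependence constant\<close>

lemma le_Inf_almost_sure_bounds:
  fixes V :: "'a \<Rightarrow> real"
  assumes fin: "finite (set_pmf P)" and z: "z \<in> set_pmf P"
  shows "V z \<le> Inf {\<delta>. \<delta> \<ge> 0 \<and> measure_pmf.prob P {x. V x \<le> \<delta>} = 1}"
proof (rule cInf_greatest)
  let ?d = "\<Sum>x\<in>set_pmf P. \<bar>V x\<bar>"
  have "V y \<le> ?d" if "y \<in> set_pmf P" for y
  proof -
    have "\<bar>V y\<bar> \<le> ?d"
      using fin that by (intro member_le_sum) auto
    then show ?thesis by linarith
  qed
  then have "measure_pmf.prob P {x. V x \<le> ?d} = 1"
    by (subst measure_pmf.prob_eq_1) (auto simp: AE_measure_pmf_iff)
  moreover have "?d \<ge> 0"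
    by (intro sum_nonneg) auto
  ultimately show "{\<delta>. \<delta> \<ge> 0 \<and> measure_pmf.prob P {x. V x \<le> \<delta>} = 1} \<noteq> {}"
    by blast
next
  fix \<delta> assume "\<delta> \<in> {\<delta>. \<delta> \<ge> 0 \<and> measure_pmf.prob P {x. V x \<le> \<delta>} = 1}"
  then have "AE x in measure_pmf P. V x \<le> \<delta>"
    by (simp add: measure_pmf.prob_eq_1)
  then show "V z \<le> \<delta>"
    using z by (simp add: AE_measure_pmf_iff)
qed

lemma group_event_eq_coordinate_event:
  assumes "finite K" "K \<noteq> {}" and onehot: "card K > 1 \<Longrightarrow> (AE y in measure_pmf P. card {j \<in> K. y j} = 1)"
    and x: "x \<in> set_pmf P"
  obtains i where "i \<in> K" "\<And>y. y \<in> set_pmf P \<Longrightarrow> (\<forall>j\<in>K. y j = x j) \<longleftrightarrow> y i = x i"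
proof (cases "card K > 1")
  case True
  then have singleton: "\<exists>i. {j \<in> K. y j} = {i}" if "y \<in> set_pmf P" for y
    using onehot that by (simp add: AE_measure_pmf_iff card_1_singleton_iff)
  obtain i where xi: "{j \<in> K. x j} = {i}"
    using singleton[OF x] by blast
  show thesis
  proof (rule that)
    show "i \<in> K"
      using xi by blast
    fix y assume "y \<in> set_pmf P"
    then obtain i' where "{j \<in> K. y j} = {i'}"
      using singleton by blast
    then have "y j \<longleftrightarrow> j = i'" if "j \<in> K" for j
      using that by blast
    moreover have "x j \<longleftrightarrow> j = i" if "j \<in> K" for j
      using xi that by blast
    ultimately show "(\<forall>j\<in>K. y j = x j) \<longleftrightarrow> y i = x i"
      using \<open>i \<in> K\<close> by auto
  qed
next
  case False
  then obtain i where "K = {i}"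
    using assms(1,2) by (metis card_0_eq card_1_singletonE less_one linorder_neqE_nat)
  then show thesis
    using that by auto
qed

lemma coordinate_event_deviation:
  assumes fin: "finite (set_pmf P)" and z: "z \<in> set_pmf P"
  shows "\<bar>cond_exp P D (indicator {y. y i = b}) z - measure_pmf.prob P {y. y i = b}\<bar>
       = \<bar>cond_exp P D (\<lambda>y. if y i then 1 else 0) z - measure_pmf.prob P {y. y i}\<bar>"
proof (cases b)
  case True
  have "indicator {y. y i} = (\<lambda>y. if y i then 1 else 0 :: real)"
    by (auto simp: indicator_def)
  then show ?thesis
    using True by simp
next
  case False
  have "indicator {y. y i = False} = (\<lambda>y. 1 - (if y i then 1 else 0) :: real)"
    by (auto simp: indicator_def)
  moreover have "measure_pmf.prob P {y. y i = False} = 1 - measure_pmf.prob P {y. y i}"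
  proof -
    have "{y. y i = False} = UNIV - {y. y i}"
      by auto
    then show ?thesis
      using measure_pmf.prob_compl[of "{y. y i}" P] by simp
  qed
  ultimately show ?thesis
    using False by (simp add: cond_exp_diff[OF fin] cond_exp_const[OF z] abs_minus_commute)
qed

lemma abs_expectation_indicator_mult_le:
  assumes fin: "finite (set_pmf P)" and h: "depends_only_on D h" "measure_pmf.expectation P h = 0"
    and dev: "\<And>z. z \<in> set_pmf P \<Longrightarrow> \<bar>cond_exp P D (indicator A) z - measure_pmf.prob P A\<bar> \<le> \<delta>"
  shows "\<bar>measure_pmf.expectation P (\<lambda>y. indicator A y * h y)\<bar> \<le> \<delta> * measure_pmf.expectation P (\<lambda>y. \<bar>h y\<bar>)"
proof -
  note integrable = integrable_measure_pmf_finite[OF fin]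
  have "measure_pmf.expectation P (\<lambda>y. indicator A y * h y)
      = measure_pmf.expectation P (\<lambda>y. (cond_exp P D (indicator A) y - measure_pmf.prob P A) * h y)"
    using expectation_cond_exp_mult[OF fin h(1), of "indicator A"] h(2)
    by (simp add: left_diff_distrib integrable)
  also have "\<bar>\<dots>\<bar> \<le> measure_pmf.expectation P (\<lambda>y. \<bar>(cond_exp P D (indicator A) y - measure_pmf.prob P A) * h y\<bar>)"
    by (rule integral_abs_bound)
  also have "\<dots> \<le> measure_pmf.expectation P (\<lambda>y. \<delta> * \<bar>h y\<bar>)"
    using dev by (intro integral_mono_AE integrable) (auto simp: AE_measure_pmf_iff abs_mult intro: mult_right_mono)
  also have "\<dots> = \<delta> * measure_pmf.expectation P (\<lambda>y. \<bar>h y\<bar>)"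
    by simp
  finally show ?thesis .
qed

locale feature_partition =
  fixes P :: "(nat \<Rightarrow> bool) pmf" and p M :: nat and G :: "nat \<Rightarrow> nat set"
  assumes supp: "\<And>x i. x \<in> set_pmf P \<Longrightarrow> x i \<Longrightarrow> i \<in> {1..p}"
    and M2: "M \<ge> 2"
    and G_ne: "\<And>k. k \<in> {1..M} \<Longrightarrow> G k \<noteq> {}"
    and G_disj: "\<And>k l. k \<in> {1..M} \<Longrightarrow> l \<in> {1..M} \<Longrightarrow> k \<noteq> l \<Longrightarrow> G k \<inter> G l = {}"
    and G_cover: "(\<Union>k\<in>{1..M}. G k) = {1..p}"
    and onehot: "\<And>k. k \<in> {1..M} \<Longrightarrow> card (G k) > 1 \<Longrightarrow>
                   (AE x in measure_pmf P. card {j \<in> G k. x j} = 1)"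
    and pmin_pos: "p_min P G M > 0"
begin

lemma finite_support: "finite (set_pmf P)"
proof -
  have "set_pmf P \<subseteq> (\<lambda>T i. i \<in> T) ` Pow {1..p}"
  proof
    fix x assume "x \<in> set_pmf P"
    then have "{i. x i} \<in> Pow {1..p}"
      using supp by auto
    moreover have "x = (\<lambda>i. i \<in> {i. x i})"
      by simp
    ultimately show "x \<in> (\<lambda>T i. i \<in> T) ` Pow {1..p}"
      by blast
  qed
  then show ?thesis
    by (rule finite_subset) simp
qed

lemma group_subset: "m \<in> {1..M} \<Longrightarrow> G m \<subseteq> {1..p}"
  using G_cover by blast

lemma finite_group: "m \<in> {1..M} \<Longrightarrow> finite (G m)"
  using group_subset finite_subset by blast

lemma p_min_le_prob_pair:
  assumes "1 \<le> l" "l < k" "k \<le> M" "i \<in> G l" "j \<in> G k"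
  shows "p_min P G M \<le> measure_pmf.prob P {x. x i = a \<and> x j = b}"
proof -
  define PS where "PS = {measure_pmf.prob P {x. x i = a \<and> x j = b} | l k i j a b.
      1 \<le> l \<and> l < k \<and> k \<le> M \<and> i \<in> G l \<and> j \<in> G k}"
  have "PS \<subseteq> (\<lambda>(i, j, a, b). measure_pmf.prob P {x. x i = a \<and> x j = b}) ` ({1..p} \<times> {1..p} \<times> UNIV \<times> UNIV)"
  proof
    fix v assume "v \<in> PS"
    then obtain l k i j a b where v: "v = measure_pmf.prob P {x. x i = a \<and> x j = b}"
      and lk: "1 \<le> l \<and> l < k \<and> k \<le> M \<and> i \<in> G l \<and> j \<in> G k"
      unfolding PS_def by blast
    have "l \<in> {1..M}" "k \<in> {1..M}"
      using lk by auto
    then have "(i, j, a, b) \<in> {1..p} \<times> {1..p} \<times> UNIV \<times> UNIV"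
      using group_subset lk by blast
    then show "v \<in> (\<lambda>(i, j, a, b). measure_pmf.prob P {x. x i = a \<and> x j = b}) ` ({1..p} \<times> {1..p} \<times> UNIV \<times> UNIV)"
      unfolding v by (rule rev_image_eqI) simp
  qed
  then have "finite PS"
    by (rule finite_subset) simp
  moreover have "measure_pmf.prob P {x. x i = a \<and> x j = b} \<in> PS"
    unfolding PS_def using assms by blast
  ultimately show ?thesis
    unfolding p_min_def PS_def[symmetric] by (rule Min_le)
qed

lemma p_min_le_prob:
  assumes m: "m \<in> {1..M}" and i: "i \<in> G m"
  shows "p_min P G M \<le> measure_pmf.prob P {y. y i = a}"
proof -
  define k where "k = (if m = 1 then 2 else (1 :: nat))"
  have k: "k \<in> {1..M}" "k \<noteq> m"
    using M2 m unfolding k_def by auto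
  then obtain j where j: "j \<in> G k"
    using G_ne by blast
  show ?thesis
  proof (cases "m < k")
    case True
    then have "p_min P G M \<le> measure_pmf.prob P {x. x i = a \<and> x j = True}"
      using m k i j by (intro p_min_le_prob_pair) auto
    also have "\<dots> \<le> measure_pmf.prob P {y. y i = a}"
      by (rule measure_pmf.finite_measure_mono) auto
    finally show ?thesis .
  next
    case False
    then have "p_min P G M \<le> measure_pmf.prob P {x. x j = True \<and> x i = a}"
      using m k i j by (intro p_min_le_prob_pair) auto
    also have "\<dots> \<le> measure_pmf.prob P {y. y i = a}"
      by (rule measure_pmf.finite_measure_mono) auto
    finally show ?thesis .
  qed
qed

lemma p_min_le_1: "p_min P G M \<le> 1"
proof -
  have "1 \<in> {1..M}"
    using M2 by simp
  moreover obtain i where "i \<in> G 1"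
    using G_ne[OF \<open>1 \<in> {1..M}\<close>] by blast
  ultimately have "p_min P G M \<le> measure_pmf.prob P {y. y i = True}"
    by (rule p_min_le_prob)
  then show ?thesis
    by (rule order_trans) (rule measure_pmf.prob_le_1)
qed

lemma coordinate_deviation_le_delta0:
  assumes m: "m \<in> {1..M}" and i: "i \<in> G m" and z: "z \<in> set_pmf P"
  shows "\<bar>cond_exp P ({1..p} - G m) (\<lambda>y. if y i then 1 else 0) z - measure_pmf.prob P {y. y i}\<bar>
         \<le> delta0 P G M p"
proof -
  define V where "V x = Max ((\<lambda>i. \<bar>cond_exp P ({1..p} - G m) (\<lambda>y. if y i then 1 else 0) x
      - measure_pmf.prob P {y. y i}\<bar>) ` G m)" for x
  have "\<bar>cond_exp P ({1..p} - G m) (\<lambda>y. if y i then 1 else 0) z - measure_pmf.prob P {y. y i}\<bar> \<le> V z"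
    unfolding V_def using finite_group[OF m] i by (intro Max_ge) auto
  also have "\<dots> \<le> Inf {\<delta>. \<delta> \<ge> 0 \<and> measure_pmf.prob P {x. V x \<le> \<delta>} = 1}"
    by (rule le_Inf_almost_sure_bounds[OF finite_support z])
  also have "\<dots> \<le> delta0 P G M p"
    unfolding delta0_def V_def using m by (intro Max_ge) auto
  finally show ?thesis .
qed

lemma delta0_nonneg: "0 \<le> delta0 P G M p"
proof -
  have one: "1 \<in> {1..M}"
    using M2 by simp
  then obtain i where i: "i \<in> G 1"
    using G_ne by blast
  obtain z where z: "z \<in> set_pmf P"
    using set_pmf_not_empty[of P] by blast
  show ?thesis
    using coordinate_deviation_le_delta0[OF one i z] by (rule order_trans[OF abs_ge_zero])
qed

lemma abs_cond_exp_group_le: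
  assumes m: "m \<in> {1..M}" and h: "depends_only_on ({1..p} - G m) h" "measure_pmf.expectation P h = 0"
    and x: "x \<in> set_pmf P"
  shows "\<bar>cond_exp P (G m) h x\<bar> \<le> delta0 P G M p * measure_pmf.expectation P (\<lambda>y. \<bar>h y\<bar>) / p_min P G M"
proof -
  obtain i where i: "i \<in> G m" and event: "\<And>y. y \<in> set_pmf P \<Longrightarrow> (\<forall>j\<in>G m. y j = x j) \<longleftrightarrow> y i = x i"
    using group_event_eq_coordinate_event[OF finite_group[OF m] G_ne[OF m] onehot[OF m] x] by blast
  define A where "A = {y. \<forall>j\<in>G m. y j = x j}"
  define B where "B = {y. y i = x i}"
  have "A \<inter> set_pmf P = B \<inter> set_pmf P"
    using event by (auto simp: A_def B_def)
  then have prob_A: "measure_pmf.prob P A = measure_pmf.prob P B"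
    by (metis measure_Int_set_pmf)
  have integral_A: "measure_pmf.expectation P (\<lambda>y. indicator A y * h y)
                  = measure_pmf.expectation P (\<lambda>y. indicator B y * h y)"
    using event by (intro integral_cong_AE) (auto simp: AE_measure_pmf_iff A_def B_def indicator_def)
  have pmin: "0 < p_min P G M" "p_min P G M \<le> measure_pmf.prob P B"
    using pmin_pos p_min_le_prob[OF m i] by (auto simp: B_def)
  have dev: "\<bar>cond_exp P ({1..p} - G m) (indicator B) z - measure_pmf.prob P B\<bar> \<le> delta0 P G M p"
    if "z \<in> set_pmf P" for z
    unfolding B_def coordinate_event_deviation[OF finite_support that]
    by (rule coordinate_deviation_le_delta0[OF m i that])
  have "\<bar>cond_exp P (G m) h x\<bar> = \<bar>measure_pmf.expectation P (\<lambda>y. indicator B y * h y)\<bar> / measure_pmf.prob P B"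
    using pmin prob_A integral_A by (simp add: cond_exp_def A_def)
  also have "\<dots> \<le> delta0 P G M p * measure_pmf.expectation P (\<lambda>y. \<bar>h y\<bar>) / p_min P G M"
    using abs_expectation_indicator_mult_le[OF finite_support h dev] pmin
    by (intro frac_le) auto
  finally show ?thesis .
qed

lemma abs_cond_exp_R_seq_residual_minus_g_fun_le:
  assumes mean0: "measure_pmf.expectation P f = 0"
    and ms: "\<And>t. t \<in> {1..n} \<Longrightarrow> ms t \<in> {1..M}" and m: "m \<in> {1..M} - ms ` {1..n}"
    and x: "x \<in> set_pmf P"
  shows "\<bar>cond_exp P (G m) (\<lambda>y. f y - R_seq P G f ms n y) x - g_fun P G p f m x\<bar>
         \<le> 2 * delta0 P G M p * sqrt (measure_pmf.expectation P (\<lambda>y. (f y)\<^sup>2)) / p_min P G M"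
proof -
  let ?E = "measure_pmf.expectation P"
  let ?F = "?E (\<lambda>y. (f y)\<^sup>2)"
  define D where "D = {1..p} - G m"
  define r where "r y = f y - R_seq P G f ms n y" for y
  define q where "q y = f y - cond_exp P D f y" for y
  define h where "h y = cond_exp P D f y - R_seq P G f ms n y" for y
  note fin = finite_support and integrable = integrable_measure_pmf_finite[OF finite_support]
  have "G (ms t) \<subseteq> D" if "t \<in> {1..n}" for t
  proof -
    have ne: "ms t \<noteq> m"
      using m that by auto
    show ?thesis
      using G_disj[OF ms[OF that] _ ne] group_subset[OF ms[OF that]] m unfolding D_def by blast
  qed
  then have "depends_only_on D (R_seq P G f ms n)"
    by (rule depends_only_on_R_seq)
  then have h_D: "depends_only_on D h"
    unfolding h_def by (intro depends_only_on_diff depends_only_on_cond_exp)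
  have h_mean0: "?E h = 0"
    unfolding h_def
    using mean0 by (simp add: integrable expectation_cond_exp[OF fin] expectation_R_seq[OF fin mean0])
  have "?E (\<lambda>y. \<bar>h y\<bar>) \<le> ?E (\<lambda>y. \<bar>r y\<bar> + \<bar>q y\<bar>)"
    unfolding h_def r_def q_def by (intro integral_mono integrable) auto
  also have "\<dots> \<le> sqrt (?E (\<lambda>y. (r y)\<^sup>2)) + sqrt (?E (\<lambda>y. (q y)\<^sup>2))"
    using expectation_abs_le_sqrt_expectation_power2[OF fin] by (simp add: integrable add_mono)
  also have "\<dots> \<le> 2 * sqrt ?F"
    unfolding r_def q_def mult_2
    by (intro add_mono real_sqrt_le_mono expectation_power2_residual_R_seq_le
        expectation_power2_cond_exp_residual_le fin)
  finally have h_L1: "?E (\<lambda>y. \<bar>h y\<bar>) \<le> 2 * sqrt ?F" .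
  have "cond_exp P (G m) r x - g_fun P G p f m x = cond_exp P (G m) h x"
    unfolding g_fun_def D_def[symmetric] q_def[symmetric] cond_exp_diff[OF fin, symmetric]
    by (rule cond_exp_cong) (simp add: r_def q_def h_def)
  also have "\<bar>\<dots>\<bar> \<le> delta0 P G M p * ?E (\<lambda>y. \<bar>h y\<bar>) / p_min P G M"
    using abs_cond_exp_group_le m h_D h_mean0 x unfolding D_def by blast
  also have "\<dots> \<le> delta0 P G M p * (2 * sqrt ?F) / p_min P G M"
    using h_L1 delta0_nonneg pmin_pos by (intro divide_right_mono mult_left_mono) auto
  finally show ?thesis
    unfolding r_def by (simp add: mult.left_commute)
qed

end

theorem mainTheorem10:
  fixes P :: "(nat \<Rightarrow> bool) pmf" and p M s m :: nat and G :: "nat \<Rightarrow> nat set"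
    and f :: "(nat \<Rightarrow> bool) \<Rightarrow> real" and ms :: "nat \<Rightarrow> nat"
  assumes supp: "\<And>x i. x \<in> set_pmf P \<Longrightarrow> x i \<Longrightarrow> i \<in> {1..p}"
    and M2: "M \<ge> 2"
    and G_ne: "\<And>k. k \<in> {1..M} \<Longrightarrow> G k \<noteq> {}"
    and G_disj: "\<And>k l. k \<in> {1..M} \<Longrightarrow> l \<in> {1..M} \<Longrightarrow> k \<noteq> l \<Longrightarrow> G k \<inter> G l = {}"
    and G_cover: "(\<Union>k\<in>{1..M}. G k) = {1..p}"
    and onehot: "\<And>k. k \<in> {1..M} \<Longrightarrow> card (G k) > 1 \<Longrightarrow>
                   (AE x in measure_pmf P. card {j \<in> G k. x j} = 1)"
    and mean0: "measure_pmf.expectation P f = 0"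
    and pmin_pos: "p_min P G M > 0"
    and s1: "s \<ge> 1"
    and ms_range: "\<And>t. t \<in> {1..s-1} \<Longrightarrow> ms t \<in> {1..M}"
    and m_range: "m \<in> {1..M} - ms ` {1..s-1}"
  shows "\<bar>measure_pmf.expectation P
            (\<lambda>x. (cond_exp P (G m) (\<lambda>y. f y - R_seq P G f ms (s-1) y) x)\<^sup>2)
          - measure_pmf.variance P (g_fun P G p f m)\<bar>
         \<le> 21 * delta0 P G M p / (p_min P G M)\<^sup>2 * measure_pmf.expectation P (\<lambda>x. (f x)\<^sup>2)"
proof -
  interpret feature_partition P p M G
    using supp M2 G_ne G_disj G_cover onehot pmin_pos by unfold_locales
  let ?E = "measure_pmf.expectation P" and ?\<delta> = "delta0 P G M p" and ?pm = "p_min P G M"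
  let ?F = "?E (\<lambda>x. (f x)\<^sup>2)"
  let ?a = "cond_exp P (G m) (\<lambda>y. f y - R_seq P G f ms (s-1) y)" and ?b = "g_fun P G p f m"
  note fin = finite_support
  have F_nonneg: "0 \<le> ?F"
    by (simp add: Bochner_Integration.integral_nonneg)
  have close: "\<bar>?a x - ?b x\<bar> \<le> 2 * ?\<delta> * sqrt ?F / ?pm" if "x \<in> set_pmf P" for x
    using abs_cond_exp_R_seq_residual_minus_g_fun_le[OF mean0 ms_range m_range that] .
  have L2_bound: "sqrt (?E (\<lambda>x. (?a x)\<^sup>2)) + sqrt (?E (\<lambda>x. (?b x)\<^sup>2)) \<le> 2 * sqrt ?F"
    unfolding g_fun_def mult_2
    by (intro add_mono real_sqrt_le_mono order_trans[OF expectation_power2_cond_exp_le[OF fin]]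
        expectation_power2_residual_R_seq_le expectation_power2_cond_exp_residual_le fin)
  have "\<bar>?E (\<lambda>x. (?a x)\<^sup>2) - ?E (\<lambda>x. (?b x)\<^sup>2)\<bar>
      \<le> 2 * ?\<delta> * sqrt ?F / ?pm * (sqrt (?E (\<lambda>x. (?a x)\<^sup>2)) + sqrt (?E (\<lambda>x. (?b x)\<^sup>2)))"
    by (rule abs_expectation_power2_diff_le[OF fin close])
  also have "\<dots> \<le> 2 * ?\<delta> * sqrt ?F / ?pm * (2 * sqrt ?F)"
    using L2_bound delta0_nonneg pmin_pos by (intro mult_left_mono) auto
  also have "\<dots> = ?pm * (4 * (?\<delta> * ?F)) / ?pm\<^sup>2"
    using pmin_pos F_nonneg by (simp add: power2_eq_square)
  also have "\<dots> \<le> 21 * (?\<delta> * ?F) / ?pm\<^sup>2"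
  proof (rule divide_right_mono)
    show "?pm * (4 * (?\<delta> * ?F)) \<le> 21 * (?\<delta> * ?F)"
      using mult_left_le_one_le[of "4 * (?\<delta> * ?F)" ?pm] pmin_pos p_min_le_1
        mult_nonneg_nonneg[OF delta0_nonneg F_nonneg] by linarith
  qed simp
  finally show ?thesis
    using expectation_g_fun[OF fin] by (simp add: mult.assoc)
qed

end
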